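(* Let $f\in\mathcal{F}_k$. Then the Lovász hinge $L^f$ embeds the loss $\ell_{\text{abs}}^f:\mathcal{V}\times\mathcal{Y}\to\mathbb{R}_+$ given by $\ell_{\text{abs}}^f(v,y)=f(\{i: v_iy_i<0\})+f(\{i:v_iy_i\le 0\})$; moreover $\ell_{\text{abs}}^f$ coincides with the restriction of $L^f$ to $\mathcal{V}\times\mathcal{Y}$.
   Context: $[k]=\{1,\dots,k\}$, $\mathcal{Y}=\{-1,1\}^k$, $\mathcal{V}=\{-1,0,1\}^k$, $\Delta_\mathcal{Y}$ the probability distributions on $\mathcal{Y}$. $u\odot u'$ is the entrywise product, $\mathbbm{1}$ the all-ones vector, $(x)_+$ the entrywise positive part. $\mathcal{F}_k$ is the class of set functions $f:2^{[k]}\to\mathbb{R}$ that are submodular ($f(S)+f(T)\ge f(S\cup T)+f(S\cap T)$), increasing ($f(S\cup T)\ge f(S)$ for disjoint $S,T$) and normalized ($f(\emptyset)=0$). The Lovász extension is $F(x)=\max_{\pi}\sum_{i=1}^k x_{\pi_i}(f(\{\pi_1,\dots,\pi_i\})-f(\{\pi_1,\dots,\pi_{i-1}\}))$ for $x\in\mathbb{R}^k_+$ (max over permutations of $[k]$), and the Lovász hinge is $L^f(u,y)=F((\mathbbm{1}-u\odot y)_+)$ for $u\in\mathbb{R}^k,y\in\mathcal{Y}$. For a loss $\ell$ and $p\in\Delta_\mathcal{Y}$, $\ell(r;p)=\sum_y p_y\ell(r,y)$. A set $\mathcal{S}\subseteq\mathcal{R}$ is representative for a loss $\ell:\mathcal{R}\times\mathcal{Y}\to\mathbb{R}_+$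 if $\arg\min_{r\in\mathcal{R}}\ell(r;p)\cap\mathcal{S}\neq\emptyset$ for all $p$. A loss $L:\mathbb{R}^d\times\mathcal{Y}\to\mathbb{R}_+$ embeds $\ell:\mathcal{R}\times\mathcal{Y}\to\mathbb{R}_+$ if there are a representative set $\mathcal{S}$ for $\ell$ and an injective $\varphi:\mathcal{S}\to\mathbb{R}^d$ such that (i) $L(\varphi(r),y)=\ell(r,y)$ for all $r\in\mathcal{S},y\in\mathcal{Y}$, and (ii) for all $p\in\Delta_\mathcal{Y}$ and $r\in\mathcal{S}$: $r\in\arg\min_{r'\in\mathcal{R}}\ell(r';p)\iff\varphi(r)\in\arg\min_{u\in\mathbb{R}^d}L(u;p)$. *)

theory Defs
  imports "HOL-Analysis.Analysis"
begin

text \<open>The index set [k] is the universe of a finite type 'n, so k = CARD('n).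
  Vectors in R^k are elements of real^'n.\<close>

definition Ycube :: "(real^'n) set" where
  "Ycube = {y. \<forall>i. y $ i = -1 \<or> y $ i = 1}"

definition Vcube :: "(real^'n) set" where
  "Vcube = {v. \<forall>i. v $ i = -1 \<or> v $ i = 0 \<or> v $ i = 1}"

definition submodular :: "('n set \<Rightarrow> real) \<Rightarrow> bool" where
  "submodular f \<longleftrightarrow> (\<forall>S T. f S + f T \<ge> f (S \<union> T) + f (S \<inter> T))"

definition increasing_setfun :: "('n set \<Rightarrow> real) \<Rightarrow> bool" where
  "increasing_setfun f \<longleftrightarrow> (\<forall>S T. S \<inter> T = {} \<longrightarrow> f (S \<union> T) \<ge> f S)"

definition normalized_setfun :: "('n set \<Rightarrow> real) \<Rightarrow> bool" where
  "normalized_setfun f \<longleftrightarrow> f {} = 0"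

definition Fclass :: "('n::finite set \<Rightarrow> real) set" where
  "Fclass = {f. submodular f \<and> increasing_setfun f \<and> normalized_setfun f}"

definition lovasz_ext :: "('n::finite set \<Rightarrow> real) \<Rightarrow> real^'n \<Rightarrow> real" where
  "lovasz_ext f x = Max {(\<Sum>i<CARD('n). x $ (\<pi> ! i) *
        (f (set (take (Suc i) \<pi>)) - f (set (take i \<pi>)))) | \<pi>.
        distinct \<pi> \<and> set \<pi> = (UNIV :: 'n set)}"

definition lovasz_hinge :: "('n::finite set \<Rightarrow> real) \<Rightarrow> real^'n \<Rightarrow> real^'n \<Rightarrow> real" where
  "lovasz_hinge f u y = lovasz_ext f (\<chi> i. max 0 (1 - u $ i * y $ i))"

definition ell_abs :: "('n::finite set \<Rightarrow> real) \<Rightarrow> real^'n \<Rightarrow> real^'n \<Rightarrow> real" where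
  "ell_abs f v y = f {i. v $ i * y $ i < 0} + f {i. v $ i * y $ i \<le> 0}"

definition distributions :: "'y set \<Rightarrow> ('y \<Rightarrow> real) set" where
  "distributions Y = {p. (\<forall>y\<in>Y. p y \<ge> 0) \<and> (\<Sum>y\<in>Y. p y) = 1}"

definition exp_loss :: "('r \<Rightarrow> 'y \<Rightarrow> real) \<Rightarrow> 'y set \<Rightarrow> 'r \<Rightarrow> ('y \<Rightarrow> real) \<Rightarrow> real" where
  "exp_loss l Y r p = (\<Sum>y\<in>Y. p y * l r y)"

definition argmin_set :: "('r \<Rightarrow> real) \<Rightarrow> 'r set \<Rightarrow> 'r set" where
  "argmin_set g R = {r\<in>R. \<forall>r'\<in>R. g r \<le> g r'}"

definition representative :: "('r \<Rightarrow> 'y \<Rightarrow> real) \<Rightarrow> 'r set \<Rightarrow> 'y set \<Rightarrow> 'r set \<Rightarrow> bool" where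
  "representative l R Y S \<longleftrightarrow> S \<subseteq> R \<and>
     (\<forall>p\<in>distributions Y. argmin_set (\<lambda>r. exp_loss l Y r p) R \<inter> S \<noteq> {})"

text \<open>L : 'u \<times> Y \<rightarrow> R (surrogate domain all of 'u, e.g. real^'d) embeds l : R \<times> Y \<rightarrow> R.\<close>
definition embeds :: "('u \<Rightarrow> 'y \<Rightarrow> real) \<Rightarrow> ('r \<Rightarrow> 'y \<Rightarrow> real) \<Rightarrow> 'r set \<Rightarrow> 'y set \<Rightarrow> bool" where
  "embeds L l R Y \<longleftrightarrow> (\<exists>S \<phi>. representative l R Y S \<and> inj_on \<phi> S \<and>
     (\<forall>r\<in>S. \<forall>y\<in>Y. L (\<phi> r) y = l r y) \<and>
     (\<forall>p\<in>distributions Y. \<forall>r\<in>S.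
        r \<in> argmin_set (\<lambda>r'. exp_loss l Y r' p) R \<longleftrightarrow>
        \<phi> r \<in> argmin_set (\<lambda>u. exp_loss L Y u p) UNIV))"

end

theory Submission
  imports Defs
begin

text \<open>
  For \<open>v \<in> Vcube\<close> and \<open>y \<in> Ycube\<close> the hinge argument \<open>1 - v \<odot> y\<close> takes values in
  \<open>{0, 1, 2}\<close> and is the sum of the indicators of \<open>B = {v\<^sub>i y\<^sub>i < 0}\<close> and
  \<open>A = {v\<^sub>i y\<^sub>i \<le> 0}\<close>. For an ordering that sorts it decreasingly, \<open>A\<close> and \<open>B\<close> are
  initial segments, so the greedy sum of the Lovasz extension telescopes to \<open>f B + f A\<close>;
  by submodularity no other ordering gives more.

  For the embedding it suffices that every report \<open>u\<close> is dominated in expectation by a point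
  of \<open>Vcube\<close>. Clipping \<open>u\<close> to \<open>w \<in> [-1, 1]\<^sup>k\<close> only lowers the hinge. Fix for each \<open>y\<close> an
  ordering sorting \<open>1 - w \<odot> y\<close> and write \<open>w = a sgn w + (1 - a) w'\<close>, where \<open>a\<close> is the
  smallest fractional \<open>\<bar>w\<^sub>i\<bar>\<close> and \<open>w'\<close> is obtained by soft thresholding. The same orderings
  still sort \<open>sgn w\<close> and \<open>w'\<close>, so the expected greedy sum is affine along this split, and
  \<open>w'\<close> has fewer fractional coordinates; induction on their number finishes the proof.
\<close>

definition perm_list :: "'n::finite list \<Rightarrow> bool" where
  "perm_list \<pi> \<longleftrightarrow> distinct \<pi> \<and> set \<pi> = UNIV"

definition marginal_gain :: "('a set \<Rightarrow> real) \<Rightarrow> 'a list \<Rightarrow> nat \<Rightarrow> real" where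
  "marginal_gain f \<pi> i = f (set (take (Suc i) \<pi>)) - f (set (take i \<pi>))"

definition greedy_sum :: "('n::finite set \<Rightarrow> real) \<Rightarrow> 'n list \<Rightarrow> real^'n \<Rightarrow> real" where
  "greedy_sum f \<pi> x = (\<Sum>i<CARD('n). x $ (\<pi> ! i) * marginal_gain f \<pi> i)"

definition decreasing_along :: "'n list \<Rightarrow> real^'n \<Rightarrow> bool" where
  "decreasing_along \<pi> x \<longleftrightarrow> sorted_wrt (\<lambda>i j. x $ j \<le> x $ i) \<pi>"

definition margin :: "real^'n \<Rightarrow> real^'n \<Rightarrow> real^'n" where
  "margin w y = (\<chi> i. 1 - w $ i * y $ i)"

lemma length_perm_list: "perm_list (\<pi> :: 'n::finite list) \<Longrightarrow> length \<pi> = CARD('n)"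
  unfolding perm_list_def by (metis distinct_card)

lemma finite_perm_lists: "finite {\<pi> :: 'n::finite list. perm_list \<pi>}"
proof -
  have "{\<pi> :: 'n list. perm_list \<pi>} \<subseteq> {xs. set xs \<subseteq> UNIV \<and> length xs = CARD('n)}"
    using length_perm_list by blast
  then show ?thesis
    by (rule finite_subset) (rule finite_lists_length_eq, simp)
qed

lemma ex_perm_list_decreasing_along: "\<exists>\<pi>. perm_list \<pi> \<and> decreasing_along \<pi> (x :: real^'n::finite)"
proof -
  obtain \<pi>\<^sub>0 :: "'n list" where "distinct \<pi>\<^sub>0" "set \<pi>\<^sub>0 = UNIV"
    using finite_distinct_list[of "UNIV :: 'n set"] by auto
  then have "perm_list (sort_key (\<lambda>i. - x $ i) \<pi>\<^sub>0)"
    by (simp add: perm_list_def)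
  moreover have "decreasing_along (sort_key (\<lambda>i. - x $ i) \<pi>\<^sub>0) x"
    using sorted_sort_key[of "\<lambda>i. - x $ i" \<pi>\<^sub>0] by (simp add: decreasing_along_def sorted_map)
  ultimately show ?thesis by blast
qed

lemma lovasz_ext_eq_Max: "lovasz_ext f x = Max ((\<lambda>\<pi>. greedy_sum f \<pi> x) ` {\<pi>. perm_list \<pi>})"
  unfolding lovasz_ext_def greedy_sum_def perm_list_def marginal_gain_def
  by (simp add: setcompr_eq_image)

lemma greedy_sum_le_lovasz_ext: "perm_list \<pi> \<Longrightarrow> greedy_sum f \<pi> x \<le> lovasz_ext f x"
  unfolding lovasz_ext_eq_Max using finite_perm_lists by (intro Max_ge) auto

lemma lovasz_ext_eqI:
  assumes "\<And>\<pi>. perm_list \<pi> \<Longrightarrow> greedy_sum f \<pi> x \<le> c"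
    and "perm_list \<pi>" and "greedy_sum f \<pi> x = c"
  shows "lovasz_ext f x = c"
proof (rule antisym)
  show "lovasz_ext f x \<le> c"
    unfolding lovasz_ext_eq_Max using finite_perm_lists assms(1,2) by (subst Max_le_iff) auto
  show "c \<le> lovasz_ext f x"
    using greedy_sum_le_lovasz_ext[OF assms(2), of f x] assms(3) by simp
qed

lemma increasing_setfun_mono:
  assumes "increasing_setfun f" and "S \<subseteq> T"
  shows "f S \<le> f T"
proof -
  have "f S \<le> f (S \<union> (T - S))"
    using assms(1) unfolding increasing_setfun_def by blast
  with assms(2) show ?thesis by (simp add: Un_absorb1)
qed

lemma marginal_gain_nonneg: "increasing_setfun f \<Longrightarrow> 0 \<le> marginal_gain f \<pi> i"
  unfolding marginal_gain_def
  using increasing_setfun_mono set_take_subset_set_take[of i "Suc i" \<pi>] by fastforce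

lemma submodular_diminishing_returns:
  assumes "submodular f" and "Q \<subseteq> P" and "a \<notin> P"
  shows "f (insert a P) - f P \<le> f (insert a Q) - f Q"
proof -
  have "f (P \<union> insert a Q) + f (P \<inter> insert a Q) \<le> f P + f (insert a Q)"
    using assms(1) unfolding submodular_def by blast
  moreover have "P \<union> insert a Q = insert a P" and "P \<inter> insert a Q = Q"
    using assms(2,3) by auto
  ultimately show ?thesis by simp
qed

lemma sum_marginal_gains_le:
  assumes "submodular f" and "normalized_setfun f" and "distinct \<pi>" and "m \<le> length \<pi>"
  shows "(\<Sum>i<m. if \<pi> ! i \<in> S then marginal_gain f \<pi> i else 0) \<le> f (S \<inter> set (take m \<pi>))"
  using assms(4)
proof (induction m)
  case 0
  then show ?case using assms(2) by (simp add: normalized_setfun_def)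
next
  case (Suc m)
  define P where "P = set (take m \<pi>)"
  have take_Suc: "set (take (Suc m) \<pi>) = insert (\<pi> ! m) P"
    using Suc.prems by (simp add: P_def take_Suc_conv_app_nth)
  have "\<pi> ! m \<notin> P"
    using distinct_take[OF assms(3), of "Suc m"] Suc.prems by (simp add: P_def take_Suc_conv_app_nth)
  then have "marginal_gain f \<pi> m \<le> f (insert (\<pi> ! m) (S \<inter> P)) - f (S \<inter> P)"
    using submodular_diminishing_returns[OF assms(1), of "S \<inter> P" P] take_Suc
    by (simp add: marginal_gain_def P_def)
  then show ?case
    using Suc take_Suc by (auto simp: P_def)
qed

lemma sum_marginal_gains_initial_segment:
  assumes "normalized_setfun f" and "sorted_wrt (\<lambda>i j. j \<in> S \<longrightarrow> i \<in> S) \<pi>" and "m \<le> length \<pi>"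
  shows "(\<Sum>i<m. if \<pi> ! i \<in> S then marginal_gain f \<pi> i else 0) = f (S \<inter> set (take m \<pi>))"
  using assms(3)
proof (induction m)
  case 0
  then show ?case using assms(1) by (simp add: normalized_setfun_def)
next
  case (Suc m)
  define P where "P = set (take m \<pi>)"
  have take_Suc: "set (take (Suc m) \<pi>) = insert (\<pi> ! m) P"
    using Suc.prems by (simp add: P_def take_Suc_conv_app_nth)
  have "P \<subseteq> S" if "\<pi> ! m \<in> S"
  proof -
    have "\<pi> ! m \<in> set (drop m \<pi>)"
      using Suc.prems by (metis Cons_nth_drop_Suc Suc_le_lessD list.set_intros(1))
    moreover have "\<forall>i\<in>P. \<forall>j\<in>set (drop m \<pi>). j \<in> S \<longrightarrow> i \<in> S"
      using assms(2) append_take_drop_id[of m \<pi>] unfolding P_def by (metis sorted_wrt_append)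
    ultimately show ?thesis using that by blast
  qed
  then have "(if \<pi> ! m \<in> S then marginal_gain f \<pi> m else 0) = f (S \<inter> insert (\<pi> ! m) P) - f (S \<inter> P)"
    using take_Suc by (auto simp: marginal_gain_def P_def Int_absorb1 Int_insert_left)
  then show ?case
    using Suc take_Suc by (simp add: P_def)
qed

lemma greedy_sum_indicator:
  assumes "perm_list \<pi>"
  shows "greedy_sum f \<pi> (\<chi> j. indicator S j) = (\<Sum>i<length \<pi>. if \<pi> ! i \<in> S then marginal_gain f \<pi> i else 0)"
  unfolding greedy_sum_def length_perm_list[OF assms] by (intro sum.cong) (auto simp: indicator_def)

lemma greedy_sum_indicator_le:
  assumes "submodular f" and "normalized_setfun f" and "perm_list \<pi>"
  shows "greedy_sum f \<pi> (\<chi> j. indicator S j) \<le> f S"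
  using sum_marginal_gains_le[OF assms(1,2), of \<pi> "length \<pi>" S] assms(3)
  by (simp add: greedy_sum_indicator perm_list_def)

lemma greedy_sum_indicator_initial_segment:
  assumes "normalized_setfun f" and "perm_list \<pi>" and "sorted_wrt (\<lambda>i j. j \<in> S \<longrightarrow> i \<in> S) \<pi>"
  shows "greedy_sum f \<pi> (\<chi> j. indicator S j) = f S"
  using sum_marginal_gains_initial_segment[OF assms(1,3), of "length \<pi>"] assms(2)
  by (simp add: greedy_sum_indicator perm_list_def)

lemma linear_greedy_sum: "linear (greedy_sum f \<pi>)"
  by (rule linearI) (simp_all add: greedy_sum_def sum.distrib sum_distrib_left algebra_simps)

lemma greedy_sum_mono:
  assumes "increasing_setfun f" and "\<And>j. x $ j \<le> x' $ j"
  shows "greedy_sum f \<pi> x \<le> greedy_sum f \<pi> x'"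
  unfolding greedy_sum_def using assms by (intro sum_mono mult_right_mono marginal_gain_nonneg) auto

lemma decreasing_along_superlevel_set:
  "decreasing_along \<pi> x \<Longrightarrow> sorted_wrt (\<lambda>i j. j \<in> {k. c \<le> x $ k} \<longrightarrow> i \<in> {k. c \<le> x $ k}) \<pi>"
  unfolding decreasing_along_def by (erule sorted_wrt_mono_rel[rotated]) auto

lemma Ycube_nth: "y \<in> Ycube \<Longrightarrow> y $ i = -1 \<or> y $ i = 1"
  unfolding Ycube_def by auto

lemma Vcube_Ycube_nth_mult:
  assumes "v \<in> Vcube" and "y \<in> Ycube"
  shows "v $ i * y $ i \<in> {-1, 0, 1}"
  using assms Ycube_nth[OF assms(2), of i] unfolding Vcube_def by auto

lemma margin_Vcube:
  assumes "v \<in> Vcube" and "y \<in> Ycube"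
  shows "margin v y = (\<chi> j. indicator {i. v $ i * y $ i < 0} j) + (\<chi> j. indicator {i. v $ i * y $ i \<le> 0} j)"
proof -
  have "1 - t = indicator {t. t < 0} t + indicator {t. t \<le> 0} t" if "t \<in> {-1, 0, 1 :: real}" for t
    using that by auto
  from this[OF Vcube_Ycube_nth_mult[OF assms]] show ?thesis
    by (simp add: vec_eq_iff margin_def indicator_def)
qed

lemma greedy_sum_margin_Vcube:
  assumes "v \<in> Vcube" and "y \<in> Ycube"
  shows "greedy_sum f \<pi> (margin v y) =
    greedy_sum f \<pi> (\<chi> j. indicator {i. v $ i * y $ i < 0} j) + greedy_sum f \<pi> (\<chi> j. indicator {i. v $ i * y $ i \<le> 0} j)"
  by (simp add: margin_Vcube[OF assms] linear_add[OF linear_greedy_sum])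

lemma greedy_sum_margin_Vcube_le:
  assumes "f \<in> Fclass" and "v \<in> Vcube" and "y \<in> Ycube" and "perm_list \<pi>"
  shows "greedy_sum f \<pi> (margin v y) \<le> ell_abs f v y"
  unfolding greedy_sum_margin_Vcube[OF assms(2,3)] ell_abs_def using assms(1,4)
  by (intro add_mono greedy_sum_indicator_le) (auto simp: Fclass_def)

lemma greedy_sum_margin_Vcube_eq:
  assumes "f \<in> Fclass" and "v \<in> Vcube" and "y \<in> Ycube" and "perm_list \<pi>"
    and "decreasing_along \<pi> (margin v y)"
  shows "greedy_sum f \<pi> (margin v y) = ell_abs f v y"
proof -
  have "(t < 0 \<longleftrightarrow> 2 \<le> 1 - t) \<and> (t \<le> 0 \<longleftrightarrow> 1 \<le> 1 - t)" if "t \<in> {-1, 0, 1 :: real}" for t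
    using that by auto
  then have "{i. v $ i * y $ i < 0} = {i. 2 \<le> margin v y $ i}"
    and "{i. v $ i * y $ i \<le> 0} = {i. 1 \<le> margin v y $ i}"
    using Vcube_Ycube_nth_mult[OF assms(2,3)] by (auto simp: margin_def)
  moreover have "greedy_sum f \<pi> (\<chi> j. indicator {i. c \<le> margin v y $ i} j) = f {i. c \<le> margin v y $ i}" for c
    using assms(1) decreasing_along_superlevel_set[OF assms(5)]
    by (intro greedy_sum_indicator_initial_segment[OF _ assms(4)]) (simp_all add: Fclass_def)
  ultimately show ?thesis
    unfolding greedy_sum_margin_Vcube[OF assms(2,3)] ell_abs_def by simp
qed

lemma lovasz_hinge_Vcube:
  assumes "f \<in> Fclass" and "v \<in> Vcube" and "y \<in> Ycube"
  shows "lovasz_hinge f v y = ell_abs f v y"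
proof -
  have "max 0 (1 - t) = 1 - t" if "t \<in> {-1, 0, 1 :: real}" for t
    using that by auto
  then have hinge: "(\<chi> i. max 0 (1 - v $ i * y $ i)) = margin v y"
    using Vcube_Ycube_nth_mult[OF assms(2,3)] by (simp add: margin_def)
  obtain \<pi> where "perm_list \<pi>" and "decreasing_along \<pi> (margin v y)"
    using ex_perm_list_decreasing_along by blast
  then show ?thesis
    unfolding lovasz_hinge_def hinge
    using assms greedy_sum_margin_Vcube_le greedy_sum_margin_Vcube_eq by (intro lovasz_ext_eqI) auto
qed

text \<open>Soft thresholding at level \<open>a\<close>, rescaled so that \<open>\<plusminus>1\<close> stay fixed.\<close>
definition shrink :: "real \<Rightarrow> real \<Rightarrow> real" where
  "shrink a t = (t - max (-a) (min a t)) / (1 - a)"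

lemma mono_shrink:
  assumes "0 \<le> a" and "a < 1"
  shows "mono (shrink a)"
proof (rule monoI)
  fix s t :: real
  assume "s \<le> t"
  then have "s - max (-a) (min a s) \<le> t - max (-a) (min a t)"
    by (auto simp: max_def min_def)
  then show "shrink a s \<le> shrink a t"
    using assms(2) by (simp add: shrink_def divide_right_mono)
qed

lemma shrink_minus: "0 \<le> a \<Longrightarrow> shrink a (- t) = - shrink a t"
  by (auto simp: shrink_def max_def min_def divide_simps)

lemma abs_shrink_le_1:
  assumes "0 \<le> a" and "a < 1" and "\<bar>t\<bar> \<le> 1"
  shows "\<bar>shrink a t\<bar> \<le> 1"
proof -
  have "\<bar>t - max (-a) (min a t)\<bar> \<le> 1 - a"
    using assms by (auto simp: max_def min_def)
  then show ?thesis
    using assms(2) by (simp add: shrink_def divide_le_eq_1)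
qed

lemma shrink_fixes_sign_values: "0 \<le> a \<Longrightarrow> a < 1 \<Longrightarrow> t \<in> {-1, 0, 1} \<Longrightarrow> shrink a t = t"
  by (auto simp: shrink_def divide_simps)

lemma shrink_eq_0: "\<bar>t\<bar> = a \<Longrightarrow> shrink a t = 0"
  by (cases "0 \<le> t") (auto simp: shrink_def max_def min_def)

lemma sgn_plus_shrink:
  assumes "0 \<le> a" and "a < 1" and "t = 0 \<or> a \<le> \<bar>t\<bar>"
  shows "t = a * sgn t + (1 - a) * shrink a t"
  using assms by (auto simp: shrink_def max_def min_def sgn_if abs_if)

lemma margin_convex_comb:
  "margin (a *\<^sub>R v + (1 - a) *\<^sub>R w) y = a *\<^sub>R margin v y + (1 - a) *\<^sub>R margin w y"
  by (simp add: vec_eq_iff margin_def algebra_simps)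

lemma decreasing_along_margin_odd_mono:
  assumes "decreasing_along \<pi> (margin w y)" and "y \<in> Ycube"
    and "mono g" and "\<And>t. g (- t) = - g t"
  shows "decreasing_along \<pi> (margin (\<chi> i. g (w $ i)) y)"
proof -
  have "g (w $ i) * y $ i = g (w $ i * y $ i)" for i
    using Ycube_nth[OF assms(2), of i] assms(4) by auto
  then show ?thesis
    using assms(1) unfolding decreasing_along_def margin_def
    by (auto elim!: sorted_wrt_mono_rel[rotated] intro: monoD[OF assms(3)])
qed

definition fractional_coords :: "real^'n \<Rightarrow> 'n set" where
  "fractional_coords w = {i. w $ i \<notin> {-1, 0, 1}}"

lemma split_off_Vcube_point:
  fixes w :: "real^'n::finite"
  assumes w: "\<And>i. \<bar>w $ i\<bar> \<le> 1" and frac: "fractional_coords w \<noteq> {}"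
  obtains a v w' where "0 < a" and "a < 1" and "v \<in> Vcube" and "w = a *\<^sub>R v + (1 - a) *\<^sub>R w'"
    and "\<And>i. \<bar>w' $ i\<bar> \<le> 1" and "card (fractional_coords w') < card (fractional_coords w)"
    and "\<And>\<pi> y. y \<in> Ycube \<Longrightarrow> decreasing_along \<pi> (margin w y) \<Longrightarrow>
           decreasing_along \<pi> (margin v y) \<and> decreasing_along \<pi> (margin w' y)"
proof -
  define a where "a = Min ((\<lambda>i. \<bar>w $ i\<bar>) ` fractional_coords w)"
  have "a \<in> (\<lambda>i. \<bar>w $ i\<bar>) ` fractional_coords w"
    unfolding a_def using frac by (intro Min_in) auto
  then obtain i\<^sub>0 where i\<^sub>0: "i\<^sub>0 \<in> fractional_coords w" "\<bar>w $ i\<^sub>0\<bar> = a"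
    by auto
  have a_pos: "0 < a" and a_lt_1: "a < 1"
    using i\<^sub>0 w[of i\<^sub>0] by (auto simp: fractional_coords_def abs_if split: if_splits)
  have gap: "w $ i = 0 \<or> a \<le> \<bar>w $ i\<bar>" for i
  proof (cases "i \<in> fractional_coords w")
    case True
    then show ?thesis by (auto simp: a_def)
  next
    case False
    then show ?thesis using a_lt_1 by (auto simp: fractional_coords_def)
  qed
  define v where "v = (\<chi> i. sgn (w $ i))"
  define w' where "w' = (\<chi> i. shrink a (w $ i))"
  have v: "v \<in> Vcube"
    by (simp add: v_def Vcube_def sgn_if)
  have decomp: "w = a *\<^sub>R v + (1 - a) *\<^sub>R w'"
    using sgn_plus_shrink[OF _ a_lt_1 gap] a_pos by (simp add: vec_eq_iff v_def w'_def)
  have w': "\<bar>w' $ i\<bar> \<le> 1" for i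
    using abs_shrink_le_1[OF _ a_lt_1 w] a_pos by (simp add: w'_def)
  have "fractional_coords w' \<subseteq> fractional_coords w - {i\<^sub>0}"
  proof
    fix i
    assume i: "i \<in> fractional_coords w'"
    then have "i \<in> fractional_coords w"
      using shrink_fixes_sign_values[OF _ a_lt_1, of "w $ i"] a_pos
      by (auto simp: fractional_coords_def w'_def)
    moreover have "i \<noteq> i\<^sub>0"
      using i shrink_eq_0[OF i\<^sub>0(2)] by (auto simp: fractional_coords_def w'_def)
    ultimately show "i \<in> fractional_coords w - {i\<^sub>0}" by blast
  qed
  then have fewer: "card (fractional_coords w') < card (fractional_coords w)"
    using i\<^sub>0(1) by (meson card_Diff1_less card_mono finite order_le_less_trans)
  have "mono (sgn :: real \<Rightarrow> real)"
    by (rule monoI) (auto simp: sgn_if)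
  then have ordered: "decreasing_along \<pi> (margin v y) \<and> decreasing_along \<pi> (margin w' y)"
    if "y \<in> Ycube" and "decreasing_along \<pi> (margin w y)" for \<pi> y
    using that mono_shrink[OF _ a_lt_1] shrink_minus a_pos unfolding v_def w'_def
    by (simp add: decreasing_along_margin_odd_mono)
  show ?thesis
    by (rule that[OF a_pos a_lt_1 v decomp w' fewer ordered])
qed

lemma min_le_convex_comb:
  fixes x y a :: real
  assumes "0 \<le> a" and "a \<le> 1"
  shows "min x y \<le> a * x + (1 - a) * y"
proof (cases "x \<le> y")
  case True
  then have "(1 - a) * x \<le> (1 - a) * y" using assms(2) by (simp add: mult_left_mono)
  then show ?thesis using True by (simp add: algebra_simps)
next
  case False
  then have "a * y \<le> a * x" using assms(1) by (simp add: mult_left_mono)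
  then show ?thesis using False by (simp add: algebra_simps)
qed

lemma exists_Vcube_le_greedy_sums:
  fixes w :: "real^'n::finite"
  assumes f: "f \<in> Fclass" and \<pi>: "\<And>y. y \<in> Ycube \<Longrightarrow> perm_list (\<pi> y)"
    and w: "\<And>i. \<bar>w $ i\<bar> \<le> 1"
    and ordered: "\<And>y. y \<in> Ycube \<Longrightarrow> decreasing_along (\<pi> y) (margin w y)"
  shows "\<exists>v\<in>Vcube. exp_loss (ell_abs f) Ycube v p \<le> (\<Sum>y\<in>Ycube. p y * greedy_sum f (\<pi> y) (margin w y))"
  using w ordered
proof (induction "card (fractional_coords w)" arbitrary: w rule: less_induct)
  case less
  show ?case
  proof (cases "fractional_coords w = {}")
    case True
    then have "w \<in> Vcube"
      by (auto simp: fractional_coords_def Vcube_def)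
    then show ?thesis
      using greedy_sum_margin_Vcube_eq[OF f] \<pi> less.prems(2)
      by (intro bexI[of _ w]) (simp_all add: exp_loss_def)
  next
    case False
    obtain a v w' where a: "0 < a" "a < 1" and v: "v \<in> Vcube" and decomp: "w = a *\<^sub>R v + (1 - a) *\<^sub>R w'"
      and w': "\<And>i. \<bar>w' $ i\<bar> \<le> 1" and fewer: "card (fractional_coords w') < card (fractional_coords w)"
      and still_ordered: "\<And>\<pi> y. y \<in> Ycube \<Longrightarrow> decreasing_along \<pi> (margin w y) \<Longrightarrow>
           decreasing_along \<pi> (margin v y) \<and> decreasing_along \<pi> (margin w' y)"
      using split_off_Vcube_point[OF less.prems(1) False] by metis
    obtain v' where v': "v' \<in> Vcube"
      and v'_le: "exp_loss (ell_abs f) Ycube v' p \<le> (\<Sum>y\<in>Ycube. p y * greedy_sum f (\<pi> y) (margin w' y))"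
      using less.hyps[OF fewer w'] still_ordered less.prems(2) by blast
    have split: "greedy_sum f (\<pi> y) (margin w y) = a * ell_abs f v y + (1 - a) * greedy_sum f (\<pi> y) (margin w' y)"
      if "y \<in> Ycube" for y
      using that greedy_sum_margin_Vcube_eq[OF f v that \<pi>] still_ordered less.prems(2)
      by (simp add: decomp margin_convex_comb linear_add[OF linear_greedy_sum] linear_scale[OF linear_greedy_sum])
    have "a * exp_loss (ell_abs f) Ycube v p + (1 - a) * exp_loss (ell_abs f) Ycube v' p \<le>
        a * exp_loss (ell_abs f) Ycube v p + (1 - a) * (\<Sum>y\<in>Ycube. p y * greedy_sum f (\<pi> y) (margin w' y))"
      using v'_le a by simp
    also have "\<dots> = (\<Sum>y\<in>Ycube. a * (p y * ell_abs f v y) + (1 - a) * (p y * greedy_sum f (\<pi> y) (margin w' y)))"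
      by (simp add: exp_loss_def sum.distrib sum_distrib_left)
    also have "\<dots> = (\<Sum>y\<in>Ycube. p y * greedy_sum f (\<pi> y) (margin w y))"
      by (intro sum.cong) (simp_all add: split algebra_simps)
    finally have "min (exp_loss (ell_abs f) Ycube v p) (exp_loss (ell_abs f) Ycube v' p) \<le>
        (\<Sum>y\<in>Ycube. p y * greedy_sum f (\<pi> y) (margin w y))"
      using min_le_convex_comb[of a "exp_loss (ell_abs f) Ycube v p" "exp_loss (ell_abs f) Ycube v' p"] a
      by linarith
    then show ?thesis
      using v v' by (auto simp: min_def split: if_splits)
  qed
qed

lemma exists_Vcube_le_lovasz_hinge:
  fixes u :: "real^'n::finite"
  assumes f: "f \<in> Fclass" and p: "p \<in> distributions Ycube"
  shows "\<exists>v\<in>Vcube. exp_loss (ell_abs f) Ycube v p \<le> exp_loss (lovasz_hinge f) Ycube u p"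
proof -
  define w :: "real^'n" where "w = (\<chi> i. max (-1) (min 1 (u $ i)))"
  have "\<forall>y. \<exists>\<pi>. perm_list \<pi> \<and> decreasing_along \<pi> (margin w y)"
    using ex_perm_list_decreasing_along by blast
  then obtain \<pi> where \<pi>: "\<And>y. perm_list (\<pi> y) \<and> decreasing_along (\<pi> y) (margin w y)"
    by (metis choice)
  have p_nonneg: "y \<in> Ycube \<Longrightarrow> 0 \<le> p y" for y
    using p by (simp add: distributions_def)
  have "greedy_sum f (\<pi> y) (margin w y) \<le> lovasz_hinge f u y" if y: "y \<in> Ycube" for y
  proof -
    have "margin w y $ i \<le> max 0 (1 - u $ i * y $ i)" for i
      using Ycube_nth[OF y, of i] by (auto simp: margin_def w_def max_def min_def)
    then have "greedy_sum f (\<pi> y) (margin w y) \<le> greedy_sum f (\<pi> y) (\<chi> i. max 0 (1 - u $ i * y $ i))"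
      using f by (intro greedy_sum_mono) (simp_all add: Fclass_def)
    also have "\<dots> \<le> lovasz_hinge f u y"
      unfolding lovasz_hinge_def using \<pi> by (rule greedy_sum_le_lovasz_ext[OF conjunct1])
    finally show ?thesis .
  qed
  then have "(\<Sum>y\<in>Ycube. p y * greedy_sum f (\<pi> y) (margin w y)) \<le> exp_loss (lovasz_hinge f) Ycube u p"
    unfolding exp_loss_def using p_nonneg by (intro sum_mono mult_left_mono) auto
  moreover have "\<exists>v\<in>Vcube. exp_loss (ell_abs f) Ycube v p \<le> (\<Sum>y\<in>Ycube. p y * greedy_sum f (\<pi> y) (margin w y))"
    using \<pi> by (intro exists_Vcube_le_greedy_sums[OF f]) (auto simp: w_def)
  ultimately show ?thesis
    by (meson order_trans)
qed

lemma finite_Vcube: "finite (Vcube :: (real^'n::finite) set)"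
proof -
  have "Vcube = vec_nth -` (UNIV \<rightarrow> {-1, 0, 1 :: real})"
    unfolding Vcube_def by (auto simp: Pi_def)
  moreover have "finite (UNIV \<rightarrow> {-1, 0, 1 :: real} :: ('n \<Rightarrow> real) set)"
    using finite_PiE[of "UNIV :: 'n set" "\<lambda>_. {-1, 0, 1 :: real}"] by (simp add: PiE_UNIV_domain)
  moreover have "inj vec_nth"
    by (rule injI) (simp add: vec_eq_iff)
  ultimately show ?thesis
    by (metis finite_vimageI)
qed

lemma zero_in_Vcube: "0 \<in> Vcube"
  by (simp add: Vcube_def)

lemma argmin_set_nonempty: "finite R \<Longrightarrow> R \<noteq> {} \<Longrightarrow> argmin_set g R \<noteq> {}"
  using arg_min_if_finite[of R g] by (auto simp: argmin_set_def not_less)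

lemma embeds_restriction:
  fixes L l :: "'r \<Rightarrow> 'y \<Rightarrow> real"
  assumes "finite R" and "R \<noteq> {}"
    and agree: "\<And>r y. r \<in> R \<Longrightarrow> y \<in> Y \<Longrightarrow> L r y = l r y"
    and dominated: "\<And>p u. p \<in> distributions Y \<Longrightarrow> \<exists>r\<in>R. exp_loss l Y r p \<le> exp_loss L Y u p"
  shows "embeds L l R Y"
  unfolding embeds_def
proof (intro exI[of _ R] exI[of _ id] conjI ballI)
  have "argmin_set g R \<inter> R = argmin_set g R" for g :: "'r \<Rightarrow> real"
    by (auto simp: argmin_set_def)
  then show "representative l R Y R"
    by (simp add: representative_def argmin_set_nonempty[OF assms(1,2)])
  have exp_agree: "exp_loss L Y r p = exp_loss l Y r p" if "r \<in> R" for r p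
    unfolding exp_loss_def using agree[OF that] by simp
  fix p r
  assume p: "p \<in> distributions Y" and r: "r \<in> R"
  show "r \<in> argmin_set (\<lambda>r'. exp_loss l Y r' p) R \<longleftrightarrow> id r \<in> argmin_set (\<lambda>u. exp_loss L Y u p) UNIV"
  proof
    assume min: "r \<in> argmin_set (\<lambda>r'. exp_loss l Y r' p) R"
    have "exp_loss L Y r p \<le> exp_loss L Y u p" for u
    proof -
      obtain r' where r': "r' \<in> R" and "exp_loss l Y r' p \<le> exp_loss L Y u p"
        using dominated[OF p] by blast
      moreover have "exp_loss l Y r p \<le> exp_loss l Y r' p"
        using min r' by (simp add: argmin_set_def)
      ultimately show ?thesis
        using exp_agree[OF r] by simp
    qed
    then show "id r \<in> argmin_set (\<lambda>u. exp_loss L Y u p) UNIV"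
      by (simp add: argmin_set_def)
  next
    assume min: "id r \<in> argmin_set (\<lambda>u. exp_loss L Y u p) UNIV"
    have "exp_loss l Y r p \<le> exp_loss l Y r' p" if "r' \<in> R" for r'
    proof -
      have "exp_loss L Y r p \<le> exp_loss L Y r' p"
        using min by (simp add: argmin_set_def)
      then show ?thesis
        using exp_agree[OF r] exp_agree[OF that] by simp
    qed
    then show "r \<in> argmin_set (\<lambda>r'. exp_loss l Y r' p) R"
      using r by (simp add: argmin_set_def)
  qed
qed (simp_all add: agree)

theorem theorem2:
  fixes f :: "'n::finite set \<Rightarrow> real"
  assumes "f \<in> Fclass"
  shows "embeds (lovasz_hinge f) (ell_abs f) Vcube Ycube \<and>
         (\<forall>v\<in>Vcube. \<forall>y\<in>Ycube. ell_abs f v y = lovasz_hinge f v y)"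
proof
  show "embeds (lovasz_hinge f) (ell_abs f) Vcube Ycube"
    using finite_Vcube zero_in_Vcube lovasz_hinge_Vcube[OF assms] exists_Vcube_le_lovasz_hinge[OF assms]
    by (intro embeds_restriction) auto
  show "\<forall>v\<in>Vcube. \<forall>y\<in>Ycube. ell_abs f v y = lovasz_hinge f v y"
    using lovasz_hinge_Vcube[OF assms] by simp
qed

end
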